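(* Let $\alpha,\beta,\gamma,\Delta\in\mathbb{C}$ with $(\Delta,\beta)\neq(0,0)$. Consider extensions of conformal $\mathrm{HV}$-modules $$0\to\mathbb{C}c_\gamma\to E\to V(\alpha,\beta,\Delta)\to0,$$ realized as $E=\mathbb{C}c_\gamma\oplus\mathbb{C}[\partial]v_\Delta$ with $\mathbb{C}c_\gamma$ a submodule and $L_\lambda v_\Delta=(\partial+\alpha+\Delta\lambda)v_\Delta+f(\lambda)c_\gamma$, $N_\lambda v_\Delta=\beta v_\Delta+k(\lambda)c_\gamma$, $f,k\in\mathbb{C}[\lambda]$. Nontrivial extensions of this form exist if and only if $\alpha+\gamma=0$, $\beta=0$ and $\Delta\in\{1,2\}$. They are given, up to equivalence, by: (i) $k(\lambda)=k_1\lambda$, $f(\lambda)=f_2\lambda^2$, for $\Delta=1$ and $(k_1,f_2)\neq(0,0)$; (ii) $k=0$, $f(\lambda)=f_3\lambda^3$, for $\Delta=2$ and $f_3\neq0$. Furthermore, the trivial cocycles are exactly the pairs $(f,k)=(a(\alpha+\gamma+\Delta\lambda),a\beta)$, $a\in\mathbb{C}$.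
   Context: A conformal module over a Lie conformal algebra $R$ is a $\mathbb{C}[\partial]$-module $V$ with $a\mapsto a_\lambda\in\mathrm{End}_{\mathbb{C}}(V)\otimes\mathbb{C}[\lambda]$ satisfying $[a_\lambda,b_\mu]=[a_\lambda b]_{\lambda+\mu}$ and $(\partial a)_\lambda=[\partial,a_\lambda]=-\lambda a_\lambda$. The Heisenberg–Virasoro conformal algebra $\mathrm{HV}$ is the free $\mathbb{C}[\partial]$-module with basis $L,N$ and $\lambda$-brackets $[L_\lambda L]=(\partial+2\lambda)L$, $[L_\lambda N]=(\partial+\lambda)N$, $[N_\lambda L]=\lambda N$, $[N_\lambda N]=0$. $V(\alpha,\beta,\Delta)=\mathbb{C}[\partial]v_\Delta$ with $L_\lambda v_\Delta=(\partial+\alpha+\Delta\lambda)v_\Delta$, $N_\lambda v_\Delta=\beta v_\Delta$. $\mathbb{C}c_\gamma$ is the one-dimensional module with $\partial c_\gamma=\gamma c_\gamma$ and $L_\lambda c_\gamma=N_\lambda c_\gamma=0$. An extension of $W$ by $V$ is an exact sequence $0\to V\to E\to W\to0$ of conformal modules; equivalence via a module map of middle terms compatible with identities; trivial means equivalent to the direct sum. *)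

theory Defs
  imports "HOL-Computational_Algebra.Polynomial"
begin

text \<open>An element (c, p) stands for
  c * c_gamma + p(d) v_Delta, with c complex and p a complex polynomial in d.
  lambda-brackets are polynomial in lambda; we evaluate them at complex lambda
  (polynomial identities are equivalent to identities at all complex values).\<close>

type_synonym E = "complex \<times> complex poly"

definition addE :: "E \<Rightarrow> E \<Rightarrow> E" where
  "addE x y = (fst x + fst y, snd x + snd y)"

definition scaleE :: "complex \<Rightarrow> E \<Rightarrow> E" where
  "scaleE z x = (z * fst x, smult z (snd x))"

definition dE :: "complex \<Rightarrow> E \<Rightarrow> E" where
  "dE \<gamma> x = (\<gamma> * fst x, [:0, 1:] * snd x)"

text \<open>L_lambda extended from L_lambda v = (d + alpha + Delta lambda) v + f(lambda) c and
  L_lambda c = 0 via L_lambda p(d) = p(d + lambda) L_lambda (C-linearity).\<close>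
definition Lact :: "complex \<Rightarrow> complex \<Rightarrow> complex \<Rightarrow> complex poly \<Rightarrow> complex \<Rightarrow> E \<Rightarrow> E" where
  "Lact \<alpha> \<Delta> \<gamma> f lam x =
     (poly (snd x) (\<gamma> + lam) * poly f lam,
      pcompose (snd x) [:lam, 1:] * [:\<alpha> + \<Delta> * lam, 1:])"

definition Nact :: "complex \<Rightarrow> complex \<Rightarrow> complex poly \<Rightarrow> complex \<Rightarrow> E \<Rightarrow> E" where
  "Nact \<beta> \<gamma> k lam x =
     (poly (snd x) (\<gamma> + lam) * poly k lam,
      smult \<beta> (pcompose (snd x) [:lam, 1:]))"

definition is_ext :: "complex \<Rightarrow> complex \<Rightarrow> complex \<Rightarrow> complex \<Rightarrow> complex poly \<Rightarrow> complex poly \<Rightarrow> bool" where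
  "is_ext \<alpha> \<beta> \<gamma> \<Delta> f k \<longleftrightarrow>
    (\<forall>l m x.
      let L = Lact \<alpha> \<Delta> \<gamma> f; N = Nact \<beta> \<gamma> k in
      addE (L l (L m x)) (scaleE (-1) (L m (L l x))) = scaleE (l - m) (L (l + m) x) \<and>
      addE (L l (N m x)) (scaleE (-1) (N m (L l x))) = scaleE (- m) (N (l + m) x) \<and>
      addE (N l (L m x)) (scaleE (-1) (L m (N l x))) = scaleE l (N (l + m) x) \<and>
      addE (N l (N m x)) (scaleE (-1) (N m (N l x))) = (0, 0) \<and>
      addE (dE \<gamma> (L l x)) (scaleE (-1) (L l (dE \<gamma> x))) = scaleE (- l) (L l x) \<and>
      addE (dE \<gamma> (N l x)) (scaleE (-1) (N l (dE \<gamma> x))) = scaleE (- l) (N l x))"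

definition ext_equiv ::
  "complex \<Rightarrow> complex \<Rightarrow> complex \<Rightarrow> complex \<Rightarrow> complex poly \<Rightarrow> complex poly \<Rightarrow>
   complex poly \<Rightarrow> complex poly \<Rightarrow> bool" where
  "ext_equiv \<alpha> \<beta> \<gamma> \<Delta> f k f' k' \<longleftrightarrow>
    (\<exists>\<phi> :: E \<Rightarrow> E.
      (\<forall>x y. \<phi> (addE x y) = addE (\<phi> x) (\<phi> y)) \<and>
      (\<forall>z x. \<phi> (scaleE z x) = scaleE z (\<phi> x)) \<and>
      (\<forall>x. \<phi> (dE \<gamma> x) = dE \<gamma> (\<phi> x)) \<and>
      (\<forall>l x. \<phi> (Lact \<alpha> \<Delta> \<gamma> f l x) = Lact \<alpha> \<Delta> \<gamma> f' l (\<phi> x)) \<and>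
      (\<forall>l x. \<phi> (Nact \<beta> \<gamma> k l x) = Nact \<beta> \<gamma> k' l (\<phi> x)) \<and>
      (\<forall>c. \<phi> (c, 0) = (c, 0)) \<and>
      (\<forall>x. snd (\<phi> x) = snd x))"

definition trivial_ext :: "complex \<Rightarrow> complex \<Rightarrow> complex \<Rightarrow> complex \<Rightarrow> complex poly \<Rightarrow> complex poly \<Rightarrow> bool" where
  "trivial_ext \<alpha> \<beta> \<gamma> \<Delta> f k \<longleftrightarrow>
     is_ext \<alpha> \<beta> \<gamma> \<Delta> f k \<and> ext_equiv \<alpha> \<beta> \<gamma> \<Delta> f k 0 0"

end

theory Submission
  imports Defs
begin

text \<open>
  Written out on the elements p(\<partial>) v_\<Delta>, the bracket axioms say that an extension of this
  form is the same as a pair (f, k) satisfying three functional equations in (\<lambda>, \<mu>), the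
  2-cocycle conditions; equivalences of extensions are exactly the maps
  v_\<Delta> \<mapsto> v_\<Delta> + a c_\<gamma>, which change (f, k) by the coboundary (a (\<alpha> + \<gamma> + \<Delta> \<lambda>), a \<beta>).
  If \<beta> \<noteq> 0, the N-N and L-N equations force (f, k) to be a coboundary, and so do the L-L and
  L-N equations at \<mu> = 0 if \<alpha> + \<gamma> \<noteq> 0. If \<alpha> + \<gamma> = \<beta> = 0, differentiating the L-L equation
  once and twice in \<lambda> at \<lambda> = 0 shows f = f_1 \<lambda> + f_2 \<lambda>^2 + f_3 \<lambda>^3 with
  (1 - \<Delta>) f_2 = (2 - \<Delta>) f_3 = 0, and the L-N equation gives k = k_1 \<lambda> with (1 - \<Delta>) k_1 = 0.
  Coboundaries do not change f_2, f_3, k_1, which gives both the normal forms and their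
  uniqueness.
\<close>

lemma poly_ext:
  fixes p q :: "'a::{idom,ring_char_0} poly"
  assumes "\<And>x. poly p x = poly q x"
  shows "p = q"
  using assms by (simp add: poly_eq_poly_eq_iff[symmetric] fun_eq_iff)

definition L_cocycle :: "complex \<Rightarrow> complex \<Rightarrow> complex poly \<Rightarrow> bool" where
  "L_cocycle s \<Delta> f \<longleftrightarrow>
     (\<forall>l m. (s + l + \<Delta> * m) * poly f l - (s + m + \<Delta> * l) * poly f m = (l - m) * poly f (l + m))"

definition LN_cocycle :: "complex \<Rightarrow> complex \<Rightarrow> complex \<Rightarrow> complex poly \<Rightarrow> complex poly \<Rightarrow> bool" where
  "LN_cocycle s \<beta> \<Delta> f k \<longleftrightarrow>
     (\<forall>l m. \<beta> * poly f l - (s + m + \<Delta> * l) * poly k m = - m * poly k (l + m))"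

definition N_cocycle :: "complex \<Rightarrow> complex poly \<Rightarrow> bool" where
  "N_cocycle \<beta> k \<longleftrightarrow> (\<forall>l m. \<beta> * poly k l = \<beta> * poly k m)"

definition coboundary :: "complex \<Rightarrow> complex \<Rightarrow> complex \<Rightarrow> complex poly \<Rightarrow> complex poly \<Rightarrow> bool" where
  "coboundary s \<beta> \<Delta> f k \<longleftrightarrow> (\<exists>a. f = smult a [:s, \<Delta>:] \<and> k = [:a * \<beta>:])"

text \<open>
  On the component \<complex>[\<partial>] v_\<Delta> each bracket axiom holds identically, since V(\<alpha>, \<beta>, \<Delta>) is a
  module; on the component \<complex> c_\<gamma>, applied to p(\<partial>) v_\<Delta>, it is p(\<gamma> + \<lambda> + \<mu>) times the
  defect of one of the cocycle equations.
\<close>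

lemma prod_eq_iff_fst_diff_factor:
  fixes x y :: "'a::idom \<times> 'b"
  assumes "snd x = snd y" and "fst x - fst y = a * (u - v)"
  shows "x = y \<longleftrightarrow> a = 0 \<or> u = v"
  using assms by (simp add: prod_eq_iff eq_iff_diff_eq_0[of "fst x"])

lemma Lact_Lact_bracket_iff:
  "addE (Lact \<alpha> \<Delta> \<gamma> f l (Lact \<alpha> \<Delta> \<gamma> f m (c, p))) (scaleE (-1) (Lact \<alpha> \<Delta> \<gamma> f m (Lact \<alpha> \<Delta> \<gamma> f l (c, p))))
     = scaleE (l - m) (Lact \<alpha> \<Delta> \<gamma> f (l + m) (c, p)) \<longleftrightarrow>
   poly p (\<gamma> + l + m) = 0 \<or>
   (\<alpha> + \<gamma> + l + \<Delta> * m) * poly f l - (\<alpha> + \<gamma> + m + \<Delta> * l) * poly f m = (l - m) * poly f (l + m)"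
  by (rule prod_eq_iff_fst_diff_factor, rule poly_ext)
     (simp_all add: addE_def scaleE_def Lact_def poly_pcompose algebra_simps)

lemma Lact_Nact_bracket_iff:
  "addE (Lact \<alpha> \<Delta> \<gamma> f l (Nact \<beta> \<gamma> k m (c, p))) (scaleE (-1) (Nact \<beta> \<gamma> k m (Lact \<alpha> \<Delta> \<gamma> f l (c, p))))
     = scaleE (- m) (Nact \<beta> \<gamma> k (l + m) (c, p)) \<longleftrightarrow>
   poly p (\<gamma> + l + m) = 0 \<or>
   \<beta> * poly f l - (\<alpha> + \<gamma> + m + \<Delta> * l) * poly k m = - m * poly k (l + m)"
  by (rule prod_eq_iff_fst_diff_factor, rule poly_ext)
     (simp_all add: addE_def scaleE_def Lact_def Nact_def poly_pcompose algebra_simps)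

lemma Nact_Lact_bracket_iff:
  "addE (Nact \<beta> \<gamma> k l (Lact \<alpha> \<Delta> \<gamma> f m (c, p))) (scaleE (-1) (Lact \<alpha> \<Delta> \<gamma> f m (Nact \<beta> \<gamma> k l (c, p))))
     = scaleE l (Nact \<beta> \<gamma> k (l + m) (c, p)) \<longleftrightarrow>
   poly p (\<gamma> + m + l) = 0 \<or>
   \<beta> * poly f m - (\<alpha> + \<gamma> + l + \<Delta> * m) * poly k l = - l * poly k (m + l)"
  (is "?bracket \<longleftrightarrow> _ \<or> ?cocycle")
proof -
  have "?bracket \<longleftrightarrow> - poly p (\<gamma> + m + l) = 0 \<or> ?cocycle"
    by (rule prod_eq_iff_fst_diff_factor, rule poly_ext)
       (simp_all add: addE_def scaleE_def Lact_def Nact_def poly_pcompose algebra_simps)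
  then show ?thesis
    by simp
qed

lemma Nact_Nact_bracket_iff:
  "addE (Nact \<beta> \<gamma> k l (Nact \<beta> \<gamma> k m (c, p))) (scaleE (-1) (Nact \<beta> \<gamma> k m (Nact \<beta> \<gamma> k l (c, p))))
     = (0, 0) \<longleftrightarrow>
   poly p (\<gamma> + l + m) = 0 \<or> \<beta> * poly k l = \<beta> * poly k m"
  by (rule prod_eq_iff_fst_diff_factor, rule poly_ext)
     (simp_all add: addE_def scaleE_def Nact_def poly_pcompose algebra_simps)

lemma dE_Lact_bracket:
  "addE (dE \<gamma> (Lact \<alpha> \<Delta> \<gamma> f l x)) (scaleE (-1) (Lact \<alpha> \<Delta> \<gamma> f l (dE \<gamma> x))) = scaleE (- l) (Lact \<alpha> \<Delta> \<gamma> f l x)"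
  by (simp add: prod_eq_iff addE_def scaleE_def Lact_def dE_def poly_pcompose algebra_simps
      fun_eq_iff flip: poly_eq_poly_eq_iff)

lemma dE_Nact_bracket:
  "addE (dE \<gamma> (Nact \<beta> \<gamma> k l x)) (scaleE (-1) (Nact \<beta> \<gamma> k l (dE \<gamma> x))) = scaleE (- l) (Nact \<beta> \<gamma> k l x)"
  by (simp add: prod_eq_iff addE_def scaleE_def Nact_def dE_def poly_pcompose algebra_simps
      fun_eq_iff flip: poly_eq_poly_eq_iff)

lemma is_ext_iff_cocycle:
  "is_ext \<alpha> \<beta> \<gamma> \<Delta> f k \<longleftrightarrow>
     L_cocycle (\<alpha> + \<gamma>) \<Delta> f \<and> LN_cocycle (\<alpha> + \<gamma>) \<beta> \<Delta> f k \<and> N_cocycle \<beta> k"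
proof -
  have "is_ext \<alpha> \<beta> \<gamma> \<Delta> f k \<longleftrightarrow>
    (\<forall>l m (p :: complex poly).
       (poly p (\<gamma> + l + m) = 0 \<or>
          (\<alpha> + \<gamma> + l + \<Delta> * m) * poly f l - (\<alpha> + \<gamma> + m + \<Delta> * l) * poly f m = (l - m) * poly f (l + m)) \<and>
       (poly p (\<gamma> + l + m) = 0 \<or> \<beta> * poly f l - (\<alpha> + \<gamma> + m + \<Delta> * l) * poly k m = - m * poly k (l + m)) \<and>
       (poly p (\<gamma> + m + l) = 0 \<or> \<beta> * poly f m - (\<alpha> + \<gamma> + l + \<Delta> * m) * poly k l = - l * poly k (m + l)) \<and>
       (poly p (\<gamma> + l + m) = 0 \<or> \<beta> * poly k l = \<beta> * poly k m))"
    unfolding is_ext_def Let_def split_paired_All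
    by (simp add: Lact_Lact_bracket_iff Lact_Nact_bracket_iff Nact_Lact_bracket_iff
        Nact_Nact_bracket_iff dE_Lact_bracket dE_Nact_bracket)
  also have "\<dots> \<longleftrightarrow> L_cocycle (\<alpha> + \<gamma>) \<Delta> f \<and> LN_cocycle (\<alpha> + \<gamma>) \<beta> \<Delta> f k \<and> N_cocycle \<beta> k"
    unfolding L_cocycle_def LN_cocycle_def N_cocycle_def
    by (metis poly_1 one_neq_zero)
  finally show ?thesis .
qed

text \<open>The module map of E determined by v_\<Delta> \<mapsto> v_\<Delta> + a c_\<gamma>.\<close>

definition twist :: "complex \<Rightarrow> complex \<Rightarrow> E \<Rightarrow> E" where
  "twist \<gamma> a x = (fst x + a * poly (snd x) \<gamma>, snd x)"

lemma twist_Lact: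
  "twist \<gamma> a (Lact \<alpha> \<Delta> \<gamma> f l x) = Lact \<alpha> \<Delta> \<gamma> (f + smult a [:\<alpha> + \<gamma>, \<Delta>:]) l (twist \<gamma> a x)"
  by (simp add: twist_def Lact_def poly_pcompose algebra_simps)

lemma twist_Nact:
  "twist \<gamma> a (Nact \<beta> \<gamma> k l x) = Nact \<beta> \<gamma> (k + [:a * \<beta>:]) l (twist \<gamma> a x)"
  by (simp add: twist_def Nact_def poly_pcompose algebra_simps)

lemma ext_morphism_eq_twist:
  assumes add: "\<And>x y. \<phi> (addE x y) = addE (\<phi> x) (\<phi> y)"
    and scale: "\<And>z x. \<phi> (scaleE z x) = scaleE z (\<phi> x)"
    and d: "\<And>x. \<phi> (dE \<gamma> x) = dE \<gamma> (\<phi> x)"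
    and sub: "\<And>c. \<phi> (c, 0) = (c, 0)"
    and quot: "\<And>x. snd (\<phi> x) = snd x"
  shows "\<phi> = twist \<gamma> (fst (\<phi> (0, 1)))"
proof -
  define a where "a = fst (\<phi> (0, 1))"
  have one: "\<phi> (0, 1) = (a, 1)"
    using quot[of "(0, 1)"] by (simp add: a_def prod_eq_iff)
  have free: "\<phi> (0, p) = (a * poly p \<gamma>, p)" for p
  proof (induction p)
    case 0
    show ?case using sub[of 0] by simp
  next
    case (pCons c q)
    have "(0, pCons c q) = addE (scaleE c (0, 1)) (dE \<gamma> (0, q))"
      by (simp add: addE_def scaleE_def dE_def)
    then have "\<phi> (0, pCons c q) = addE (scaleE c (a, 1)) (dE \<gamma> (a * poly q \<gamma>, q))"
      by (simp only: add scale d one pCons.IH)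
    then show ?case
      by (simp add: addE_def scaleE_def dE_def algebra_simps)
  qed
  have "\<phi> (c, p) = twist \<gamma> a (c, p)" for c p
  proof -
    have "\<phi> (c, p) = addE (\<phi> (c, 0)) (\<phi> (0, p))"
      using add[of "(c, 0)" "(0, p)"] by (simp add: addE_def)
    then show ?thesis
      by (simp add: sub free addE_def twist_def)
  qed
  then show ?thesis
    unfolding a_def[symmetric] by (intro ext) (metis prod.collapse)
qed

lemma ext_equiv_iff_coboundary:
  "ext_equiv \<alpha> \<beta> \<gamma> \<Delta> f k f' k' \<longleftrightarrow> coboundary (\<alpha> + \<gamma>) \<beta> \<Delta> (f - f') (k - k')"
proof
  assume "ext_equiv \<alpha> \<beta> \<gamma> \<Delta> f k f' k'"
  then obtain \<phi> where
    "\<And>x y. \<phi> (addE x y) = addE (\<phi> x) (\<phi> y)" "\<And>z x. \<phi> (scaleE z x) = scaleE z (\<phi> x)"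
    "\<And>x. \<phi> (dE \<gamma> x) = dE \<gamma> (\<phi> x)" "\<And>c. \<phi> (c, 0) = (c, 0)" "\<And>x. snd (\<phi> x) = snd x"
    and L: "\<And>l x. \<phi> (Lact \<alpha> \<Delta> \<gamma> f l x) = Lact \<alpha> \<Delta> \<gamma> f' l (\<phi> x)"
    and N: "\<And>l x. \<phi> (Nact \<beta> \<gamma> k l x) = Nact \<beta> \<gamma> k' l (\<phi> x)"
    unfolding ext_equiv_def by blast
  then obtain a where \<phi>: "\<phi> = twist \<gamma> a"
    using ext_morphism_eq_twist by blast
  have "fst (Lact \<alpha> \<Delta> \<gamma> f' l (twist \<gamma> a (0, 1))) =
        fst (Lact \<alpha> \<Delta> \<gamma> (f + smult a [:\<alpha> + \<gamma>, \<Delta>:]) l (twist \<gamma> a (0, 1)))" for l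
    using L[of l "(0, 1)"] by (simp add: \<phi> twist_Lact)
  then have "f' = f + smult a [:\<alpha> + \<gamma>, \<Delta>:]"
    by (intro poly_ext) (simp add: Lact_def twist_def)
  moreover have "fst (Nact \<beta> \<gamma> k' l (twist \<gamma> a (0, 1))) =
        fst (Nact \<beta> \<gamma> (k + [:a * \<beta>:]) l (twist \<gamma> a (0, 1)))" for l
    using N[of l "(0, 1)"] by (simp add: \<phi> twist_Nact)
  then have "k' = k + [:a * \<beta>:]"
    by (intro poly_ext) (simp add: Nact_def twist_def)
  ultimately show "coboundary (\<alpha> + \<gamma>) \<beta> \<Delta> (f - f') (k - k')"
    unfolding coboundary_def by (intro exI[of _ "- a"]) simp
next
  assume "coboundary (\<alpha> + \<gamma>) \<beta> \<Delta> (f - f') (k - k')"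
  then obtain a where "f - f' = smult a [:\<alpha> + \<gamma>, \<Delta>:]" "k - k' = [:a * \<beta>:]"
    unfolding coboundary_def by blast
  then have "f' = f + smult (- a) [:\<alpha> + \<gamma>, \<Delta>:]" "k' = k + [:- a * \<beta>:]"
    by (simp_all add: diff_eq_eq)
  then have L: "twist \<gamma> (- a) (Lact \<alpha> \<Delta> \<gamma> f l x) = Lact \<alpha> \<Delta> \<gamma> f' l (twist \<gamma> (- a) x)"
    and N: "twist \<gamma> (- a) (Nact \<beta> \<gamma> k l x) = Nact \<beta> \<gamma> k' l (twist \<gamma> (- a) x)" for l x
    by (simp_all only: twist_Lact twist_Nact)
  show "ext_equiv \<alpha> \<beta> \<gamma> \<Delta> f k f' k'"
    unfolding ext_equiv_def
    by (intro exI[of _ "twist \<gamma> (- a)"] conjI allI L N)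
       (simp_all add: twist_def addE_def scaleE_def dE_def algebra_simps)
qed

lemma coboundary_is_ext:
  "coboundary (\<alpha> + \<gamma>) \<beta> \<Delta> f k \<Longrightarrow> is_ext \<alpha> \<beta> \<gamma> \<Delta> f k"
  unfolding coboundary_def is_ext_iff_cocycle L_cocycle_def LN_cocycle_def N_cocycle_def
  by (elim exE conjE) (simp add: algebra_simps)

lemma trivial_ext_iff_coboundary:
  "trivial_ext \<alpha> \<beta> \<gamma> \<Delta> f k \<longleftrightarrow> coboundary (\<alpha> + \<gamma>) \<beta> \<Delta> f k"
  using coboundary_is_ext by (auto simp: trivial_ext_def ext_equiv_iff_coboundary)

lemma coboundary_coeff_eq_0:
  assumes "coboundary s \<beta> \<Delta> f k"
  shows "2 \<le> n \<Longrightarrow> coeff f n = 0" and "1 \<le> n \<Longrightarrow> coeff k n = 0"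
proof -
  from assms obtain a where "f = smult a [:s, \<Delta>:]" "k = [:a * \<beta>:]"
    unfolding coboundary_def by blast
  then have "degree f \<le> 1" "degree k = 0"
    by simp_all
  then show "2 \<le> n \<Longrightarrow> coeff f n = 0" and "1 \<le> n \<Longrightarrow> coeff k n = 0"
    by (simp_all add: coeff_eq_0)
qed

lemma ext_equiv_coeff_eq:
  assumes "ext_equiv \<alpha> \<beta> \<gamma> \<Delta> f k f' k'"
  shows "2 \<le> n \<Longrightarrow> coeff f n = coeff f' n" and "1 \<le> n \<Longrightarrow> coeff k n = coeff k' n"
  using coboundary_coeff_eq_0[of "\<alpha> + \<gamma>" \<beta> \<Delta> "f - f'" "k - k'" n] assms
  by (simp_all add: ext_equiv_iff_coboundary)

lemma cocycle_coboundary_if_beta_nonzero: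
  assumes "\<beta> \<noteq> 0" and LN: "LN_cocycle s \<beta> \<Delta> f k" and N: "N_cocycle \<beta> k"
  shows "coboundary s \<beta> \<Delta> f k"
proof -
  define a where "a = poly k 0 / \<beta>"
  have "poly k l = a * \<beta>" for l
    using N \<open>\<beta> \<noteq> 0\<close> by (simp add: N_cocycle_def a_def)
  then have "k = [:a * \<beta>:]"
    by (intro poly_ext) simp
  moreover have "\<beta> * poly f l = (s + \<Delta> * l) * poly k 0" for l
    using LN[unfolded LN_cocycle_def, rule_format, of l 0] by simp
  then have "f = smult a [:s, \<Delta>:]"
    using \<open>\<beta> \<noteq> 0\<close> by (intro poly_ext) (simp add: a_def field_simps)
  ultimately show ?thesis
    unfolding coboundary_def by blast
qed

lemma cocycle_coboundary_if_shift_nonzero: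
  assumes "s \<noteq> 0" and L: "L_cocycle s \<Delta> f" and LN: "LN_cocycle s 0 \<Delta> f k"
  shows "coboundary s 0 \<Delta> f k"
proof -
  define a where "a = poly f 0 / s"
  have "poly f l = a * (s + \<Delta> * l)" for l
  proof -
    have "s * poly f l = (s + \<Delta> * l) * poly f 0"
      using L[unfolded L_cocycle_def, rule_format, of l 0] by (simp add: algebra_simps)
    then show ?thesis
      using \<open>s \<noteq> 0\<close> by (simp add: a_def field_simps)
  qed
  then have "f = smult a [:s, \<Delta>:]"
    by (intro poly_ext) (simp add: algebra_simps)
  moreover have "s * poly k m = 0" for m
    using LN[unfolded LN_cocycle_def, rule_format, of 0 m] by (simp add: algebra_simps)
  then have "k = [:a * 0:]"
    using \<open>s \<noteq> 0\<close> by (intro poly_ext) simp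
  ultimately show ?thesis
    unfolding coboundary_def by blast
qed

lemma L_cocycle_zero_shift_pderiv_eqs:
  assumes "L_cocycle 0 \<Delta> f"
  shows "pCons 0 (pderiv f) - smult (\<Delta> + 1) f + [:poly f 0, \<Delta> * poly (pderiv f) 0:] = 0"
      (is "?D1 = 0")
    and "pCons 0 (pderiv (pderiv f)) - smult 2 (pderiv f)
           + [:2 * poly (pderiv f) 0, \<Delta> * poly (pderiv (pderiv f)) 0:] = 0"
      (is "?D2 = 0")
proof -
  \<comment> \<open>The cocycle equation at fixed m, read as a polynomial identity in l.\<close>
  define P where "P m = [:\<Delta> * m, 1:] * f - smult (poly f m) [:m, \<Delta>:] - [:- m, 1:] * pcompose f [:m, 1:]"
    for m
  have "poly (P m) l = 0" for l m
    using assms[unfolded L_cocycle_def, rule_format, of l m]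
    by (simp add: P_def poly_pcompose algebra_simps)
  then have P: "P m = 0" for m
    using poly_all_0_iff_0 by blast
  have "poly ?D1 m = 0" and "poly ?D2 m = 0" for m
  proof -
    have "poly (pderiv (P m)) 0 = 0" and "poly (pderiv (pderiv (P m))) 0 = 0"
      by (simp_all add: P)
    then show "poly ?D1 m = 0" and "poly ?D2 m = 0"
      unfolding P_def pderiv_diff pderiv_add pderiv_mult pderiv_smult pderiv_pcompose
      by (simp_all add: pderiv_pCons poly_pcompose algebra_simps)
  qed
  then show "?D1 = 0" and "?D2 = 0"
    by (simp_all only: poly_all_0_iff_0[symmetric]) blast+
qed

lemma L_cocycle_zero_shift_coeffs:
  assumes "L_cocycle 0 \<Delta> f" and "\<Delta> \<noteq> 0"
  shows "f = monom (coeff f 1) 1 + monom (coeff f 2) 2 + monom (coeff f 3) 3"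
    and "(1 - \<Delta>) * coeff f 2 = 0" and "(2 - \<Delta>) * coeff f 3 = 0"
proof -
  have "\<Delta> * poly f 0 = 0"
    using assms(1)[unfolded L_cocycle_def, rule_format, of 1 0] by simp
  then have f0: "coeff f 0 = 0"
    using \<open>\<Delta> \<noteq> 0\<close> by (simp add: poly_0_coeff_0)
  have deriv1: "(of_nat n + 1 - \<Delta>) * coeff f (n + 2) = 0" for n
    using arg_cong[OF L_cocycle_zero_shift_pderiv_eqs(1)[OF assms(1)], of "\<lambda>p. coeff p (Suc (Suc n))"]
    by (simp add: coeff_pderiv algebra_simps)
  have deriv2: "of_nat ((n + 3) * n) * coeff f (n + 3) = 0" for n
    using arg_cong[OF L_cocycle_zero_shift_pderiv_eqs(2)[OF assms(1)], of "\<lambda>p. coeff p (Suc (Suc n))"]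
    by (simp add: coeff_pderiv algebra_simps numeral_3_eq_3)
  have high: "coeff f n = 0" if "4 \<le> n" for n
  proof -
    have n: "n = Suc (n - 4) + 3"
      using that by simp
    have "of_nat ((Suc (n - 4) + 3) * Suc (n - 4)) \<noteq> (0 :: complex)"
      by (simp only: of_nat_eq_0_iff) simp
    then show ?thesis
      using deriv2[of "Suc (n - 4)"] that by (simp flip: n)
  qed
  show "(1 - \<Delta>) * coeff f 2 = 0"
    using deriv1[of 0] by (simp add: numeral_2_eq_2)
  show "(2 - \<Delta>) * coeff f 3 = 0"
    using deriv1[of 1] by (simp add: numeral_3_eq_3)
  show "f = monom (coeff f 1) 1 + monom (coeff f 2) 2 + monom (coeff f 3) 3"
  proof (rule poly_eqI)
    fix n
    show "coeff f n = coeff (monom (coeff f 1) 1 + monom (coeff f 2) 2 + monom (coeff f 3) 3) n"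
      using f0 high[of n] by (cases "n \<le> 3") (auto simp: coeff_monom le_Suc_eq numeral_3_eq_3 numeral_2_eq_2)
  qed
qed

lemma LN_cocycle_zero_shift:
  assumes "LN_cocycle 0 0 \<Delta> f k" and "\<Delta> \<noteq> 0"
  shows "k = monom (poly k 1) 1" and "(1 - \<Delta>) * poly k 1 = 0"
proof -
  define k1 where "k1 = poly k 1"
  have LN: "(m + \<Delta> * l) * poly k m = m * poly k (l + m)" for l m
    using assms(1)[unfolded LN_cocycle_def, rule_format, of l m] by simp
  have k: "poly k t = (1 + \<Delta> * (t - 1)) * k1" for t
    using LN[where l = "t - 1" and m = 1] by (simp add: k1_def)
  have "poly k 0 = 0"
    using LN[where l = 1 and m = 0] \<open>\<Delta> \<noteq> 0\<close> by simp
  then show "(1 - \<Delta>) * poly k 1 = 0"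
    using k[of 0] by (simp add: k1_def)
  then show "k = monom (poly k 1) 1"
    by (intro poly_ext) (auto simp: k poly_monom algebra_simps simp flip: k1_def)
qed

lemma cocycle_zero_shift_normal_form:
  assumes "\<Delta> \<noteq> 0" and L: "L_cocycle 0 \<Delta> f" and LN: "LN_cocycle 0 0 \<Delta> f k"
  shows "\<exists>k1 f2 f3. coboundary 0 0 \<Delta> (f - monom f2 2 - monom f3 3) (k - monom k1 1) \<and>
           (\<Delta> \<noteq> 1 \<longrightarrow> k1 = 0 \<and> f2 = 0) \<and> (\<Delta> \<noteq> 2 \<longrightarrow> f3 = 0)"
proof -
  define a1 a2 a3 k1 where "a1 = coeff f 1" "a2 = coeff f 2" "a3 = coeff f 3" "k1 = poly k 1"
  have f: "f = monom a1 1 + monom a2 2 + monom a3 3"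
    and k: "k = monom k1 1"
    using L_cocycle_zero_shift_coeffs(1)[OF L \<open>\<Delta> \<noteq> 0\<close>] LN_cocycle_zero_shift(1)[OF LN \<open>\<Delta> \<noteq> 0\<close>]
    by (simp_all add: a1_a2_a3_k1_def)
  have "coboundary 0 0 \<Delta> (f - monom a2 2 - monom a3 3) (k - monom k1 1)"
    unfolding coboundary_def f k by (intro exI[of _ "a1 / \<Delta>"]) (simp add: monom_Suc monom_0 \<open>\<Delta> \<noteq> 0\<close>)
  moreover have "\<Delta> \<noteq> 1 \<longrightarrow> k1 = 0 \<and> a2 = 0" and "\<Delta> \<noteq> 2 \<longrightarrow> a3 = 0"
    using LN_cocycle_zero_shift(2)[OF LN \<open>\<Delta> \<noteq> 0\<close>] L_cocycle_zero_shift_coeffs(2,3)[OF L \<open>\<Delta> \<noteq> 0\<close>]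
    by (auto simp: a1_a2_a3_k1_def)
  ultimately show ?thesis
    by blast
qed

lemma cocycle_classification:
  assumes "(\<Delta>, \<beta>) \<noteq> (0, 0)" and L: "L_cocycle s \<Delta> f" and LN: "LN_cocycle s \<beta> \<Delta> f k"
    and N: "N_cocycle \<beta> k" and "\<not> coboundary s \<beta> \<Delta> f k"
  shows "s = 0 \<and> \<beta> = 0 \<and>
    (\<exists>k1 f2 f3. coboundary s \<beta> \<Delta> (f - monom f2 2 - monom f3 3) (k - monom k1 1) \<and>
       (\<Delta> \<noteq> 1 \<longrightarrow> k1 = 0 \<and> f2 = 0) \<and> (\<Delta> \<noteq> 2 \<longrightarrow> f3 = 0))"
proof -
  have "\<beta> = 0"
    using cocycle_coboundary_if_beta_nonzero LN N assms(5) by blast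
  moreover from this have "s = 0"
    using cocycle_coboundary_if_shift_nonzero L LN assms(5) by blast
  moreover from \<open>\<beta> = 0\<close> have "\<Delta> \<noteq> 0"
    using assms(1) by simp
  ultimately show ?thesis
    using cocycle_zero_shift_normal_form L LN by blast
qed

lemma nontrivial_ext_normal_form:
  assumes "(\<Delta>, \<beta>) \<noteq> (0, 0)" and "is_ext \<alpha> \<beta> \<gamma> \<Delta> f k" and "\<not> trivial_ext \<alpha> \<beta> \<gamma> \<Delta> f k"
  shows "\<alpha> + \<gamma> = 0 \<and> \<beta> = 0 \<and>
    (\<Delta> = 1 \<and> (\<exists>k1 f2. (k1, f2) \<noteq> (0, 0) \<and> ext_equiv \<alpha> \<beta> \<gamma> \<Delta> f k (monom f2 2) (monom k1 1)) \<or>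
     \<Delta> = 2 \<and> (\<exists>f3. f3 \<noteq> 0 \<and> ext_equiv \<alpha> \<beta> \<gamma> \<Delta> f k (monom f3 3) 0))"
proof -
  have nontrivial: "\<not> coboundary (\<alpha> + \<gamma>) \<beta> \<Delta> f k"
    using assms(3) by (simp add: trivial_ext_iff_coboundary)
  then obtain k1 f2 f3 where "\<alpha> + \<gamma> = 0" "\<beta> = 0"
    and cob: "coboundary (\<alpha> + \<gamma>) \<beta> \<Delta> (f - monom f2 2 - monom f3 3) (k - monom k1 1)"
    and Delta1: "\<Delta> \<noteq> 1 \<longrightarrow> k1 = 0 \<and> f2 = 0" and Delta2: "\<Delta> \<noteq> 2 \<longrightarrow> f3 = 0"
    using cocycle_classification assms(1,2) by (metis is_ext_iff_cocycle)
  moreover have "\<Delta> = 1 \<or> \<Delta> = 2"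
    using cob nontrivial Delta1 Delta2 by fastforce
  moreover have "\<Delta> = 1 \<Longrightarrow> (k1, f2) \<noteq> (0, 0) \<and> ext_equiv \<alpha> \<beta> \<gamma> \<Delta> f k (monom f2 2) (monom k1 1)"
    using cob nontrivial Delta2 by (auto simp: ext_equiv_iff_coboundary)
  moreover have "\<Delta> = 2 \<Longrightarrow> f3 \<noteq> 0 \<and> ext_equiv \<alpha> \<beta> \<gamma> \<Delta> f k (monom f3 3) 0"
    using cob nontrivial Delta1 by (auto simp: ext_equiv_iff_coboundary)
  ultimately show ?thesis
    by blast
qed

lemma Delta1_ext_classification:
  assumes "\<alpha> + \<gamma> = 0" and "\<beta> = 0" and "\<Delta> = 1"
  shows "(\<forall>k1 f2. (k1, f2) \<noteq> (0, 0) \<longrightarrow>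
            is_ext \<alpha> \<beta> \<gamma> \<Delta> (monom f2 2) (monom k1 1) \<and>
            \<not> trivial_ext \<alpha> \<beta> \<gamma> \<Delta> (monom f2 2) (monom k1 1)) \<and>
        (\<forall>f k. is_ext \<alpha> \<beta> \<gamma> \<Delta> f k \<and> \<not> trivial_ext \<alpha> \<beta> \<gamma> \<Delta> f k \<longrightarrow>
            (\<exists>k1 f2. (k1, f2) \<noteq> (0, 0) \<and>
               ext_equiv \<alpha> \<beta> \<gamma> \<Delta> f k (monom f2 2) (monom k1 1))) \<and>
        (\<forall>k1 f2 k1' f2'.
            ext_equiv \<alpha> \<beta> \<gamma> \<Delta> (monom f2 2) (monom k1 1) (monom f2' 2) (monom k1' 1)
            \<longrightarrow> k1 = k1' \<and> f2 = f2')"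
proof -
  have "is_ext \<alpha> \<beta> \<gamma> \<Delta> (monom f2 2) (monom k1 1)" for k1 f2
    unfolding is_ext_iff_cocycle L_cocycle_def LN_cocycle_def N_cocycle_def
    using assms by (simp add: poly_monom algebra_simps power2_eq_square)
  moreover have "\<not> trivial_ext \<alpha> \<beta> \<gamma> \<Delta> (monom f2 2) (monom k1 1)" if "(k1, f2) \<noteq> (0, 0)" for k1 f2
    using that coboundary_coeff_eq_0(1)[of "\<alpha> + \<gamma>" \<beta> \<Delta> "monom f2 2" "monom k1 1" 2]
      coboundary_coeff_eq_0(2)[of "\<alpha> + \<gamma>" \<beta> \<Delta> "monom f2 2" "monom k1 1" 1]
    by (auto simp: trivial_ext_iff_coboundary)
  moreover have "k1 = k1' \<and> f2 = f2'"
    if "ext_equiv \<alpha> \<beta> \<gamma> \<Delta> (monom f2 2) (monom k1 1) (monom f2' 2) (monom k1' 1)" for k1 f2 k1' f2'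
    using ext_equiv_coeff_eq(1)[OF that, of 2] ext_equiv_coeff_eq(2)[OF that, of 1] by simp
  ultimately show ?thesis
    using nontrivial_ext_normal_form[of \<Delta> \<beta>] assms by auto
qed

lemma Delta2_ext_classification:
  assumes "\<alpha> + \<gamma> = 0" and "\<beta> = 0" and "\<Delta> = 2"
  shows "(\<forall>f3. f3 \<noteq> 0 \<longrightarrow>
            is_ext \<alpha> \<beta> \<gamma> \<Delta> (monom f3 3) 0 \<and>
            \<not> trivial_ext \<alpha> \<beta> \<gamma> \<Delta> (monom f3 3) 0) \<and>
        (\<forall>f k. is_ext \<alpha> \<beta> \<gamma> \<Delta> f k \<and> \<not> trivial_ext \<alpha> \<beta> \<gamma> \<Delta> f k \<longrightarrow>
            (\<exists>f3. f3 \<noteq> 0 \<and> ext_equiv \<alpha> \<beta> \<gamma> \<Delta> f k (monom f3 3) 0)) \<and>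
        (\<forall>f3 f3'. ext_equiv \<alpha> \<beta> \<gamma> \<Delta> (monom f3 3) 0 (monom f3' 3) 0 \<longrightarrow> f3 = f3')"
proof -
  have "is_ext \<alpha> \<beta> \<gamma> \<Delta> (monom f3 3) 0" for f3
    unfolding is_ext_iff_cocycle L_cocycle_def LN_cocycle_def N_cocycle_def
    using assms by (simp add: poly_monom algebra_simps power3_eq_cube)
  moreover have "\<not> trivial_ext \<alpha> \<beta> \<gamma> \<Delta> (monom f3 3) 0" if "f3 \<noteq> 0" for f3
    using that coboundary_coeff_eq_0(1)[of "\<alpha> + \<gamma>" \<beta> \<Delta> "monom f3 3" 0 3]
    by (auto simp: trivial_ext_iff_coboundary)
  moreover have "f3 = f3'" if "ext_equiv \<alpha> \<beta> \<gamma> \<Delta> (monom f3 3) 0 (monom f3' 3) 0" for f3 f3'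
    using ext_equiv_coeff_eq(1)[OF that, of 3] by simp
  ultimately show ?thesis
    using nontrivial_ext_normal_form[of \<Delta> \<beta>] assms by auto
qed

lemma nontrivial_ext_exists_iff:
  assumes "(\<Delta>, \<beta>) \<noteq> (0, 0)"
  shows "(\<exists>f k. is_ext \<alpha> \<beta> \<gamma> \<Delta> f k \<and> \<not> trivial_ext \<alpha> \<beta> \<gamma> \<Delta> f k) \<longleftrightarrow>
         (\<alpha> + \<gamma> = 0 \<and> \<beta> = 0 \<and> \<Delta> \<in> {1, 2})"
proof
  assume "\<exists>f k. is_ext \<alpha> \<beta> \<gamma> \<Delta> f k \<and> \<not> trivial_ext \<alpha> \<beta> \<gamma> \<Delta> f k"
  then show "\<alpha> + \<gamma> = 0 \<and> \<beta> = 0 \<and> \<Delta> \<in> {1, 2}"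
    using nontrivial_ext_normal_form[OF assms] by blast
next
  assume h: "\<alpha> + \<gamma> = 0 \<and> \<beta> = 0 \<and> \<Delta> \<in> {1, 2}"
  then consider "\<Delta> = 1" | "\<Delta> = 2"
    by blast
  then show "\<exists>f k. is_ext \<alpha> \<beta> \<gamma> \<Delta> f k \<and> \<not> trivial_ext \<alpha> \<beta> \<gamma> \<Delta> f k"
  proof cases
    case 1
    with h show ?thesis
      using Delta1_ext_classification[THEN conjunct1, rule_format, of \<alpha> \<gamma> \<beta> \<Delta> 0 1] by auto
  next
    case 2
    with h show ?thesis
      using Delta2_ext_classification[THEN conjunct1, rule_format, of \<alpha> \<gamma> \<beta> \<Delta> 1] by auto
  qed
qed

theorem corollary6p1:
  fixes \<alpha> \<beta> \<gamma> \<Delta> :: complex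
  assumes "(\<Delta>, \<beta>) \<noteq> (0, 0)"
  shows
    "((\<exists>f k. is_ext \<alpha> \<beta> \<gamma> \<Delta> f k \<and> \<not> trivial_ext \<alpha> \<beta> \<gamma> \<Delta> f k) \<longleftrightarrow>
        (\<alpha> + \<gamma> = 0 \<and> \<beta> = 0 \<and> \<Delta> \<in> {1, 2}))
   \<and> ((\<alpha> + \<gamma> = 0 \<and> \<beta> = 0 \<and> \<Delta> = 1) \<longrightarrow>
        (\<forall>k1 f2. (k1, f2) \<noteq> (0, 0) \<longrightarrow>
            is_ext \<alpha> \<beta> \<gamma> \<Delta> (monom f2 2) (monom k1 1) \<and>
            \<not> trivial_ext \<alpha> \<beta> \<gamma> \<Delta> (monom f2 2) (monom k1 1)) \<and>
        (\<forall>f k. is_ext \<alpha> \<beta> \<gamma> \<Delta> f k \<and> \<not> trivial_ext \<alpha> \<beta> \<gamma> \<Delta> f k \<longrightarrow>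
            (\<exists>k1 f2. (k1, f2) \<noteq> (0, 0) \<and>
               ext_equiv \<alpha> \<beta> \<gamma> \<Delta> f k (monom f2 2) (monom k1 1))) \<and>
        (\<forall>k1 f2 k1' f2'.
            ext_equiv \<alpha> \<beta> \<gamma> \<Delta> (monom f2 2) (monom k1 1) (monom f2' 2) (monom k1' 1)
            \<longrightarrow> k1 = k1' \<and> f2 = f2'))
   \<and> ((\<alpha> + \<gamma> = 0 \<and> \<beta> = 0 \<and> \<Delta> = 2) \<longrightarrow>
        (\<forall>f3. f3 \<noteq> 0 \<longrightarrow>
            is_ext \<alpha> \<beta> \<gamma> \<Delta> (monom f3 3) 0 \<and>
            \<not> trivial_ext \<alpha> \<beta> \<gamma> \<Delta> (monom f3 3) 0) \<and>
        (\<forall>f k. is_ext \<alpha> \<beta> \<gamma> \<Delta> f k \<and> \<not> trivial_ext \<alpha> \<beta> \<gamma> \<Delta> f k \<longrightarrow>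
            (\<exists>f3. f3 \<noteq> 0 \<and> ext_equiv \<alpha> \<beta> \<gamma> \<Delta> f k (monom f3 3) 0)) \<and>
        (\<forall>f3 f3'. ext_equiv \<alpha> \<beta> \<gamma> \<Delta> (monom f3 3) 0 (monom f3' 3) 0 \<longrightarrow> f3 = f3'))
   \<and> (\<forall>f k. trivial_ext \<alpha> \<beta> \<gamma> \<Delta> f k \<longleftrightarrow>
        (\<exists>a. f = smult a [:\<alpha> + \<gamma>, \<Delta>:] \<and> k = [:a * \<beta>:]))"
  by (intro conjI allI nontrivial_ext_exists_iff[OF assms]
      trivial_ext_iff_coboundary[unfolded coboundary_def];
      rule impI, elim conjE, rule Delta1_ext_classification Delta2_ext_classification; assumption)

end
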